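(* Let $m$, $t$, $c$, $\beta$, $\mathcal{C}_{\mathrm{MU}}$ and the markers be as in the context. A uniformly random string $\mathbf{z}\in\{0,1\}^m$ is legit with probability $1-1/\operatorname{poly}(m)$.
   Context: Logarithms are base 2. Let $t\ge1$ and $m>t$ be integers, let $c\ge 3$ be an integer, and let $\beta=32$. A mutually uncorrelated (MU) code is a set of binary strings of equal length such that no nonempty proper prefix of any codeword equals a suffix of any (possibly the same) codeword. Let $\mathcal{C}_{\mathrm{MU}}$ be an MU code of length $c\log m$ with $|\mathcal{C}_{\mathrm{MU}}|\ge \frac{2^{c\log m}}{\beta c\log m}$. The markers $\mathbf{m}_0,\ldots,\mathbf{m}_t$ are the $t+1$ lexicographically first codewords of $\mathcal{C}_{\mathrm{MU}}$. For $\mathbf{z}\in\{0,1\}^m$, any occurrence (as a contiguous substring) of a codeword of $\mathcal{C}_{\mathrm{MU}}$ in $\mathbf{z}$ is called a level-$0$ signature. A string $\mathbf{z}\in\{0,1\}^m$ is legit if: (I) every interval (contiguous substring) of $\mathbf{z}$ of length $2\beta c\log^2 m+c\log m-1$ contains a level-$0$ signature; (II) every two non-overlapping substrings of $\mathbf{z}$ of length $c\log m$ are distinct; (III) $\mathbf{z}$ contains none of the markers $\mathbf{m}_0,\ldots,\mathbf{m}_t$ as a substring. *)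

theory Defs
  imports Complex_Main
begin

definition beta :: nat where "beta = 32"

definition occurs_in :: "bool list \<Rightarrow> bool list \<Rightarrow> bool" where
  "occurs_in w z \<longleftrightarrow> (\<exists>i. i + length w \<le> length z \<and> take (length w) (drop i z) = w)"

definition MU_code :: "nat \<Rightarrow> bool list set \<Rightarrow> bool" where
  "MU_code n C \<longleftrightarrow> (\<forall>a\<in>C. length a = n) \<and>
     (\<forall>a\<in>C. \<forall>b\<in>C. \<forall>k. 0 < k \<and> k < n \<longrightarrow> take k a \<noteq> drop (n - k) b)"

definition cw_len :: "nat \<Rightarrow> nat \<Rightarrow> nat" where
  "cw_len c m = nat \<lceil>real c * log 2 (real m)\<rceil>"

definition int_len :: "nat \<Rightarrow> nat \<Rightarrow> nat" where
  "int_len c m = nat \<lceil>2 * real beta * real c * (log 2 (real m))\<^sup>2 + real c * log 2 (real m) - 1\<rceil>"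

text \<open>Markers: the t+1 lexicographically first codewords (all codewords if fewer).\<close>
definition markers :: "bool list set \<Rightarrow> nat \<Rightarrow> bool list set" where
  "markers C t = {w \<in> C. card {v \<in> C. lexordp (<) v w} < t + 1}"

definition legit :: "nat \<Rightarrow> nat \<Rightarrow> bool list set \<Rightarrow> bool list \<Rightarrow> bool" where
  "legit c t C z \<longleftrightarrow>
     (let m = length z; n = cw_len c m; L = int_len c m in
      (\<forall>i. i + L \<le> m \<longrightarrow> (\<exists>w\<in>C. occurs_in w (take L (drop i z)))) \<and>
      (\<forall>i j. i + n \<le> j \<and> j + n \<le> m \<longrightarrow> take n (drop i z) \<noteq> take n (drop j z)) \<and>
      (\<forall>w\<in>markers C t. \<not> occurs_in w z))"

end

(* A string is avoiding if no codeword of C occurs in it; let A(L) count the avoiding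
   strings of length L, n be the code length and N = |C|.  Appending one bit to the
   avoiding strings of length L + n - 1 yields all avoiding strings of length L + n and,
   disjointly, all strings u @ c with u avoiding of length L and c in C: mutual
   uncorrelation forbids a codeword to straddle the seam of u @ take (n - 1) c.  As also
   A(L + n - 1) <= 2^(n-1) A(L), the density A(L) / 2^L shrinks by a factor 1 - N / 2^n
   with every bit beyond the first n - 1, so over the interval length of (I) it falls to
   exp(1 - 2 log m) <= 3 / m^2.  A union bound over the at most m window positions for (I),
   the at most m^2 pairs of positions for (II) and the at most (t + 1) m marker placements
   for (III), each of the latter two having probability 2^-n <= m^-3, gives failure
   probability at most 5 / m. *)

theory Submission
  imports Defs "HOL-Library.Sublist"
begin

definition avoiding :: "bool list set \<Rightarrow> nat \<Rightarrow> bool list set" where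
  "avoiding C L = {x. length x = L \<and> (\<forall>w\<in>C. \<not> occurs_in w x)}"

definition some_window_in :: "nat \<Rightarrow> nat \<Rightarrow> bool list set \<Rightarrow> bool list set" where
  "some_window_in m L S = {z. length z = m \<and> (\<exists>i. i + L \<le> m \<and> take L (drop i z) \<in> S)}"

definition repeated_window :: "nat \<Rightarrow> nat \<Rightarrow> bool list set" where
  "repeated_window m n = {z. length z = m \<and>
     (\<exists>i j. i + n \<le> j \<and> j + n \<le> m \<and> take n (drop i z) = take n (drop j z))}"

lemma card_bool_lists: "card {xs :: bool list. length xs = k} = 2 ^ k"
  using card_lists_length_eq[of "UNIV :: bool set" k] by simp

lemma finite_bool_lists: "finite {xs :: bool list. length xs = k}"
  using finite_lists_length_eq[of "UNIV :: bool set" k] by simp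

lemma append_take_window_drop:
  "take i z @ take L (drop i z) @ drop (i + L) z = z"
  by (metis append_take_drop_id add.commute drop_drop)

lemma card_window_in_le:
  assumes S: "S \<subseteq> {x. length x = L}" and "i + L \<le> m"
  shows "card {z :: bool list. length z = m \<and> take L (drop i z) \<in> S} \<le> 2 ^ (m - L) * card S"
proof -
  let ?D = "{a :: bool list. length a = i} \<times> S \<times> {b :: bool list. length b = m - i - L}"
  have "finite S" using S finite_bool_lists finite_subset by blast
  then have "finite ?D" by (intro finite_cartesian_product finite_bool_lists)
  moreover have "{z. length z = m \<and> take L (drop i z) \<in> S} \<subseteq> (\<lambda>(a, s, b). a @ s @ b) ` ?D"
  proof
    fix z :: "bool list" assume "z \<in> {z. length z = m \<and> take L (drop i z) \<in> S}"
    then have "(take i z, take L (drop i z), drop (i + L) z) \<in> ?D" using assms by auto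
    then show "z \<in> (\<lambda>(a, s, b). a @ s @ b) ` ?D"
      by (rule image_eqI[rotated]) (simp add: append_take_window_drop)
  qed
  ultimately have "card {z. length z = m \<and> take L (drop i z) \<in> S} \<le> card ?D"
    by (rule surj_card_le)
  also have "\<dots> = 2 ^ i * 2 ^ (m - i - L) * card S"
    by (simp add: card_cartesian_product card_bool_lists)
  also have "\<dots> = 2 ^ (m - L) * card S"
    using assms(2) by (simp flip: power_add)
  finally show ?thesis .
qed

lemma card_prefix_in_le:
  assumes "S \<subseteq> {x. length x = L}"
  shows "card {z :: bool list. length z = L + k \<and> take L z \<in> S} \<le> 2 ^ k * card S"
  using card_window_in_le[OF assms, of 0 "L + k"] by simp

lemma card_equal_windows_le:
  assumes "i + n \<le> j" "j + n \<le> m"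
  shows "card {z :: bool list. length z = m \<and> take n (drop i z) = take n (drop j z)} \<le> 2 ^ (m - n)"
proof -
  let ?D = "{a :: bool list. length a = j} \<times> {b :: bool list. length b = m - j - n}"
  have "finite ?D" by (intro finite_cartesian_product finite_bool_lists)
  moreover have "{z :: bool list. length z = m \<and> take n (drop i z) = take n (drop j z)}
    \<subseteq> (\<lambda>(a, b). a @ take n (drop i a) @ b) ` ?D"
  proof
    fix z :: "bool list" assume z: "z \<in> {z. length z = m \<and> take n (drop i z) = take n (drop j z)}"
    have "take n (drop i (take j z)) = take n (drop j z)"
      using z assms by (simp add: take_drop min_def)
    then have "z = (\<lambda>(a, b). a @ take n (drop i a) @ b) (take j z, drop (j + n) z)"
      by (simp add: append_take_window_drop)
    moreover have "(take j z, drop (j + n) z) \<in> ?D" using z assms by auto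
    ultimately show "z \<in> (\<lambda>(a, b). a @ take n (drop i a) @ b) ` ?D"
      by (rule image_eqI)
  qed
  ultimately have "card {z :: bool list. length z = m \<and> take n (drop i z) = take n (drop j z)}
      \<le> card ?D"
    by (rule surj_card_le)
  also have "\<dots> = 2 ^ (m - n)"
    using assms by (simp add: card_cartesian_product card_bool_lists flip: power_add)
  finally show ?thesis .
qed

lemma some_window_in_fraction_le:
  assumes S: "S \<subseteq> {x. length x = L}" and "0 < L"
  shows "real (card (some_window_in m L S)) / 2 ^ m \<le> real m * (real (card S) / 2 ^ L)"
proof (cases "L \<le> m")
  case True
  have "some_window_in m L S = (\<Union>i\<le>m - L. {z. length z = m \<and> take L (drop i z) \<in> S})"
    unfolding some_window_in_def using True by (auto simp: le_diff_conv2)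
  then have "card (some_window_in m L S)
      \<le> (\<Sum>i\<le>m - L. card {z. length z = m \<and> take L (drop i z) \<in> S})"
    by (simp add: card_UN_le)
  also have "\<dots> \<le> (\<Sum>i\<le>m - L. 2 ^ (m - L) * card S)"
    by (rule sum_mono) (use card_window_in_le[OF S] True in \<open>auto simp: le_diff_conv2\<close>)
  also have "\<dots> = Suc (m - L) * (2 ^ (m - L) * card S)"
    by simp
  also have "\<dots> \<le> m * (2 ^ (m - L) * card S)"
    using \<open>0 < L\<close> True by (intro mult_right_mono) auto
  finally have "real (card (some_window_in m L S)) \<le> real (m * (2 ^ (m - L) * card S))"
    by (simp only: of_nat_le_iff)
  then have "real (card (some_window_in m L S)) \<le> real m * (2 ^ (m - L) * real (card S))"
    by simp
  then have "real (card (some_window_in m L S)) / 2 ^ m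
      \<le> real m * (2 ^ (m - L) * real (card S)) / 2 ^ m"
    by (simp add: divide_right_mono)
  also have "\<dots> = real m * (real (card S) / 2 ^ L)"
    using True by (simp add: power_diff)
  finally show ?thesis .
next
  case False
  then have "some_window_in m L S = {}" unfolding some_window_in_def by auto
  then show ?thesis by simp
qed

lemma repeated_window_fraction_le:
  assumes "0 < n"
  shows "real (card (repeated_window m n)) / 2 ^ m \<le> (real m)\<^sup>2 / 2 ^ n"
proof (cases "n \<le> m")
  case True
  let ?P = "\<lambda>(i, j). {z :: bool list. length z = m \<and> i + n \<le> j \<and> j + n \<le> m \<and>
                                        take n (drop i z) = take n (drop j z)}"
  have "repeated_window m n = (\<Union>ij\<in>{..<m} \<times> {..<m}. ?P ij)"
    unfolding repeated_window_def using assms by fastforce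
  then have "card (repeated_window m n) \<le> (\<Sum>ij\<in>{..<m} \<times> {..<m}. card (?P ij))"
    by (simp add: card_UN_le)
  also have "\<dots> \<le> (\<Sum>ij\<in>{..<m} \<times> {..<m}. 2 ^ (m - n))"
  proof (rule sum_mono)
    fix ij :: "nat \<times> nat"
    obtain i j where ij: "ij = (i, j)" by fastforce
    show "card (?P ij) \<le> 2 ^ (m - n)"
    proof (cases "i + n \<le> j \<and> j + n \<le> m")
      case True
      then have "?P ij = {z. length z = m \<and> take n (drop i z) = take n (drop j z)}"
        unfolding ij by auto
      then show ?thesis using card_equal_windows_le[of i n j m] True by simp
    next
      case False
      then have "?P ij = {}" unfolding ij by auto
      then show ?thesis by simp
    qed
  qed
  also have "\<dots> = m ^ 2 * 2 ^ (m - n)"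
    by (simp add: power2_eq_square)
  finally have "real (card (repeated_window m n)) \<le> real (m ^ 2 * 2 ^ (m - n))"
    by (simp only: of_nat_le_iff)
  then have "real (card (repeated_window m n)) / 2 ^ m \<le> (real m)\<^sup>2 * 2 ^ (m - n) / 2 ^ m"
    by (simp add: divide_right_mono)
  also have "\<dots> = (real m)\<^sup>2 / 2 ^ n"
    using True by (simp add: power_diff)
  finally show ?thesis .
next
  case False
  then have "repeated_window m n = {}" unfolding repeated_window_def by auto
  then show ?thesis by simp
qed

lemma occurs_in_iff_sublist: "occurs_in w z \<longleftrightarrow> sublist w z"
proof
  assume "occurs_in w z"
  then obtain i where "i + length w \<le> length z" "take (length w) (drop i z) = w"
    unfolding occurs_in_def by blast
  then show "sublist w z"
    using append_take_window_drop[where i = i and L = "length w" and z = z] sublist_appendI by metis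
next
  assume "sublist w z"
  then obtain ps ss where "z = ps @ w @ ss" unfolding sublist_def by blast
  then show "occurs_in w z"
    unfolding occurs_in_def by (intro exI[of _ "length ps"]) simp
qed

lemma MU_code_subset: "MU_code n C \<Longrightarrow> C \<subseteq> {x. length x = n}"
  unfolding MU_code_def by blast

lemma MU_code_finite: "MU_code n C \<Longrightarrow> finite C"
  using MU_code_subset finite_bool_lists finite_subset by blast

lemma MU_code_card_le: "MU_code n C \<Longrightarrow> card C \<le> 2 ^ n"
  using MU_code_subset card_mono[OF finite_bool_lists] card_bool_lists by metis

lemma avoiding_subset: "avoiding C L \<subseteq> {x. length x = L}"
  unfolding avoiding_def by blast

lemma take_in_avoiding: "x \<in> avoiding C L' \<Longrightarrow> L \<le> L' \<Longrightarrow> take L x \<in> avoiding C L"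
  unfolding avoiding_def occurs_in_iff_sublist
  by (auto intro: sublist_order.order.trans[OF _ sublist_take])

lemma avoiding_append_code_prefix:
  assumes mu: "MU_code n C" and "0 < n" and u: "u \<in> avoiding C L" and c: "c \<in> C"
  shows "u @ take (n - 1) c \<in> avoiding C (L + n - 1)"
proof -
  have lengths: "length u = L" "length c = n"
    using u c MU_code_subset[OF mu] unfolding avoiding_def by auto
  have "\<not> sublist w (u @ take (n - 1) c)" if w: "w \<in> C" for w
  proof
    assume "sublist w (u @ take (n - 1) c)"
    moreover have "length w = n" using w MU_code_subset[OF mu] by auto
    moreover have "\<not> sublist w u" using u w unfolding avoiding_def occurs_in_iff_sublist by blast
    ultimately obtain w1 w2 where w12: "w = w1 @ w2" "suffix w1 u" "prefix w2 (take (n - 1) c)"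
      using sublist_length_le[of w "take (n - 1) c"] \<open>0 < n\<close> by (auto simp: sublist_append)
    define k where "k = length w2"
    have "k \<noteq> 0"
      using w12 \<open>\<not> sublist w u\<close> unfolding k_def by auto
    moreover have "k < n"
      using prefix_length_le[OF w12(3)] \<open>0 < n\<close> unfolding k_def by auto
    moreover have "take k c = drop (n - k) w"
    proof -
      obtain zs where "take (n - 1) c = w2 @ zs" using w12(3) unfolding prefix_def by blast
      have "take k c = take k (take (n - 1) c)" using \<open>k < n\<close> by (simp add: min_def)
      also have "\<dots> = w2" using \<open>take (n - 1) c = w2 @ zs\<close> unfolding k_def by simp
      finally have "take k c = w2" .
      moreover have "drop (n - k) w = w2" using w12(1) \<open>length w = n\<close> unfolding k_def by simp
      ultimately show ?thesis by simp
    qed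
    ultimately show False
      using mu w c unfolding MU_code_def by blast
  qed
  then show ?thesis
    using lengths \<open>0 < n\<close> unfolding avoiding_def occurs_in_iff_sublist by auto
qed

lemma card_avoiding_add_le: "card (avoiding C (L + k)) \<le> 2 ^ k * card (avoiding C L)"
proof -
  have "avoiding C (L + k) \<subseteq> {z. length z = L + k \<and> take L z \<in> avoiding C L}"
    using take_in_avoiding[of _ C "L + k" L] avoiding_subset by auto
  then have "card (avoiding C (L + k)) \<le> card {z. length z = L + k \<and> take L z \<in> avoiding C L}"
    by (intro card_mono finite_subset[OF _ finite_bool_lists]) auto
  also have "\<dots> \<le> 2 ^ k * card (avoiding C L)"
    by (rule card_prefix_in_le[OF avoiding_subset])
  finally show ?thesis .
qed

lemma inj_on_append_fixed_length: "inj_on (\<lambda>(u, v). u @ v) ({u. length u = L} \<times> UNIV)"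
proof (rule inj_onI)
  fix x y :: "'a list \<times> 'a list"
  assume "x \<in> {u. length u = L} \<times> UNIV" "y \<in> {u. length u = L} \<times> UNIV"
    and "(\<lambda>(u, v). u @ v) x = (\<lambda>(u, v). u @ v) y"
  then show "x = y" by (cases x, cases y) simp
qed

lemma card_avoiding_step:
  assumes mu: "MU_code n C" and "0 < n"
  shows "card (avoiding C (L + n)) + card (avoiding C L) * card C
    \<le> 2 * card (avoiding C (L + n - 1))"
proof -
  let ?T = "{z. length z = L + n \<and> take (L + n - 1) z \<in> avoiding C (L + n - 1)}"
  let ?glued = "(\<lambda>(u, c). u @ c) ` (avoiding C L \<times> C)"
  have "finite ?T" by (rule finite_subset[OF _ finite_bool_lists]) auto
  have card_T: "card ?T \<le> 2 * card (avoiding C (L + n - 1))"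
    using card_prefix_in_le[OF avoiding_subset[of C "L + n - 1"], of 1] \<open>0 < n\<close> by simp
  have avoid: "avoiding C (L + n) \<subseteq> ?T"
    using take_in_avoiding[of _ C "L + n" "L + n - 1"] avoiding_subset by auto
  have glued: "?glued \<subseteq> ?T"
  proof
    fix x assume "x \<in> ?glued"
    then obtain u c where uc: "u \<in> avoiding C L" "c \<in> C" "x = u @ c" by auto
    moreover have "length u = L" "length c = n"
      using uc MU_code_subset[OF mu] avoiding_subset by auto
    ultimately show "x \<in> ?T"
      using avoiding_append_code_prefix[OF mu \<open>0 < n\<close>] \<open>0 < n\<close> by simp
  qed
  have "inj_on (\<lambda>(u, c). u @ c) (avoiding C L \<times> C)"
    by (rule inj_on_subset[OF inj_on_append_fixed_length])
      (rule Sigma_mono[OF avoiding_subset subset_UNIV])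
  then have card_glued: "card ?glued = card (avoiding C L) * card C"
    by (simp add: card_image card_cartesian_product)
  have "avoiding C (L + n) \<inter> ?glued = {}"
    using sublist_append_leftI unfolding avoiding_def occurs_in_iff_sublist by fast
  then have "card (avoiding C (L + n)) + card ?glued = card (avoiding C (L + n) \<union> ?glued)"
    using avoid glued \<open>finite ?T\<close>
    by (intro card_Un_disjoint[symmetric]) (auto intro: finite_subset)
  also have "\<dots> \<le> card ?T"
    using avoid glued \<open>finite ?T\<close> by (intro card_mono) auto
  finally show ?thesis using card_T card_glued by linarith
qed

lemma avoiding_density_decay:
  assumes mu: "MU_code (Suc j) C"
  shows "real (card (avoiding C (j + k))) / 2 ^ (j + k) \<le> (1 - real (card C) / 2 ^ Suc j) ^ k"
proof (induction k)
  case 0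
  have "card (avoiding C j) \<le> 2 ^ j"
    using card_mono[OF finite_bool_lists avoiding_subset] card_bool_lists by metis
  then have "real (card (avoiding C j)) \<le> 2 ^ j"
    by (metis of_nat_le_iff of_nat_numeral of_nat_power)
  then show ?case by simp
next
  case (Suc k)
  define A where "A l = real (card (avoiding C l))" for l
  define N where "N = real (card C)"
  have "N \<le> 2 ^ Suc j"
    using MU_code_card_le[OF mu] unfolding N_def by (metis of_nat_le_iff of_nat_numeral of_nat_power)
  have step: "A (k + Suc j) + A k * N \<le> 2 * A (k + j)"
    using card_avoiding_step[OF mu, of k] unfolding A_def N_def
    by (metis (mono_tags) add_Suc_right diff_Suc_1 of_nat_add of_nat_le_iff of_nat_mult
        of_nat_numeral zero_less_Suc)
  have "A (k + j) \<le> 2 ^ j * A k"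
    using card_avoiding_add_le[of C k j] unfolding A_def
    by (metis of_nat_le_iff of_nat_mult of_nat_numeral of_nat_power)
  then have "N * A (k + j) \<le> N * (2 ^ j * A k)"
    unfolding N_def by (rule mult_left_mono) simp
  then have "N * A (k + j) / 2 ^ j \<le> A k * N"
    by (simp add: field_simps)
  with step have "A (j + Suc k) \<le> 2 * A (j + k) * (1 - N / 2 ^ Suc j)"
    by (simp add: algebra_simps)
  then have "A (j + Suc k) / 2 ^ (j + Suc k) \<le> (1 - N / 2 ^ Suc j) * (A (j + k) / 2 ^ (j + k))"
    by (simp add: field_simps)
  also have "\<dots> \<le> (1 - N / 2 ^ Suc j) * (1 - N / 2 ^ Suc j) ^ k"
    using Suc.IH \<open>N \<le> 2 ^ Suc j\<close> unfolding A_def N_def by (intro mult_left_mono) auto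
  finally show ?case unfolding A_def N_def by simp
qed

lemma cw_len_bounds:
  assumes "2 \<le> m" "3 \<le> c"
  shows "0 < cw_len c m" and "real (cw_len c m) \<le> real c * log 2 m + 1"
    and "real m ^ 3 \<le> 2 ^ cw_len c m"
proof -
  have "1 \<le> log 2 m" using assms(1) by simp
  then have "0 < real c * log 2 m" using assms(2) by simp
  then show "0 < cw_len c m" and "real (cw_len c m) \<le> real c * log 2 m + 1"
    unfolding cw_len_def by linarith+
  have "real m ^ 3 = (2 powr log 2 m) powr 3"
    using assms(1) by simp
  also have "\<dots> = 2 powr (3 * log 2 m)"
    by (simp add: powr_powr mult.commute)
  also have "\<dots> \<le> 2 powr (real c * log 2 m)"
    using assms \<open>1 \<le> log 2 m\<close> by (intro powr_mono mult_right_mono) auto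
  also have "\<dots> \<le> 2 powr (real (cw_len c m))"
    unfolding cw_len_def by (intro powr_mono real_nat_ceiling_ge) simp
  finally show "real m ^ 3 \<le> 2 ^ cw_len c m"
    by (simp add: powr_realpow)
qed

lemma int_len_ge:
  "2 * real beta * real c * (log 2 m)\<^sup>2 + real c * log 2 m - 1 \<le> real (int_len c m)"
  unfolding int_len_def by (rule real_nat_ceiling_ge)

lemma int_len_pos:
  assumes "2 \<le> m" and "0 < c"
  shows "0 < int_len c m"
proof -
  have "1 \<le> log 2 m" using assms(1) by simp
  then have "1 \<le> (log 2 m)\<^sup>2" by simp
  then have "1 * 1 \<le> real c * (log 2 m)\<^sup>2" using assms(2) by (intro mult_mono) auto
  moreover have "0 \<le> real c * log 2 m" using \<open>1 \<le> log 2 m\<close> by simp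
  ultimately have "0 < real (int_len c m)"
    using int_len_ge[of c m] unfolding beta_def by linarith
  then show ?thesis by simp
qed

lemma one_minus_power_le_exp:
  assumes "p \<le> 1"
  shows "(1 - p) ^ k \<le> exp (- (p * real k))"
proof -
  have "(1 - p) ^ k \<le> exp (- p) ^ k"
    using assms exp_ge_add_one_self[of "- p"] by (intro power_mono) auto
  then show ?thesis by (simp add: exp_of_nat_mult[symmetric] mult.commute)
qed

lemma exp_one_minus_two_log2_le:
  assumes "1 \<le> x"
  shows "exp (1 - 2 * log 2 x) \<le> 3 / x\<^sup>2"
proof -
  have "ln x \<le> log 2 x"
    using assms ln_2_less_1 ln_ge_zero[of x] by (simp add: log_def divide_simps mult_left_le)
  then have "exp (1 - 2 * log 2 x) \<le> exp (1 - 2 * ln x)"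
    by simp
  also have "\<dots> = exp 1 / exp (ln (x\<^sup>2))"
    using assms by (simp add: exp_diff ln_realpow)
  also have "\<dots> = exp 1 / x\<^sup>2"
    using assms by simp
  also have "\<dots> \<le> 3 / x\<^sup>2"
    using exp_le by (intro divide_right_mono) auto
  finally show ?thesis .
qed

lemma gap_times_density_ge:
  fixes a k lg p :: real
  assumes "1 \<le> lg" and "0 \<le> p" and "p \<le> 1" and "1 \<le> p * (a * lg)"
    and "2 * a * lg\<^sup>2 - 1 \<le> k"
  shows "2 * lg - 1 \<le> p * k"
proof -
  have "p * (2 * a * lg\<^sup>2 - 1) \<le> p * k"
    using assms(5,2) by (rule mult_left_mono)
  moreover have "2 * lg * 1 \<le> 2 * lg * (p * (a * lg))"
    using assms(1,4) by (intro mult_left_mono) auto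
  moreover have "p * (2 * a * lg\<^sup>2 - 1) = 2 * lg * (p * (a * lg)) - p"
    by (simp add: algebra_simps power2_eq_square)
  ultimately show ?thesis
    using assms(3) by linarith
qed

lemma avoiding_int_len_density_le:
  assumes m: "2 \<le> m" and c: "3 \<le> c" and mu: "MU_code (cw_len c m) C"
    and big: "2 ^ cw_len c m / (real beta * real c * log 2 m) \<le> real (card C)"
  shows "real (card (avoiding C (int_len c m))) / 2 ^ int_len c m \<le> 3 / (real m)\<^sup>2"
proof -
  define lg where "lg = log 2 (real m)"
  define a where "a = real beta * real c"
  have "1 \<le> lg" using m unfolding lg_def by simp
  moreover have "1 \<le> a" using c unfolding a_def beta_def by simp
  ultimately have "1 \<le> a * lg" using mult_mono[of 1 a 1 lg] by simp
  then have "1 \<le> (a * lg) * lg" using \<open>1 \<le> lg\<close> mult_mono[of 1 "a * lg" 1 lg] by simp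
  obtain j where n: "cw_len c m = Suc j"
    using cw_len_bounds(1)[OF m c] gr0_implies_Suc by blast
  define p where "p = real (card C) / 2 ^ Suc j"
  have "real (card C) \<le> 2 ^ Suc j"
    using MU_code_card_le[OF mu] unfolding n by (metis of_nat_le_iff of_nat_numeral of_nat_power)
  then have "0 \<le> p" "p \<le> 1" unfolding p_def by simp_all
  have "1 \<le> p * (a * lg)"
    using big \<open>1 \<le> a * lg\<close> unfolding p_def n lg_def a_def by (simp add: field_simps)
  have "real j \<le> real c * lg"
    using cw_len_bounds(2)[OF m c] unfolding n lg_def by simp
  then have "j \<le> int_len c m" and "2 * a * lg\<^sup>2 - 1 \<le> real (int_len c m) - real j"
    using int_len_ge[of c m] \<open>1 \<le> (a * lg) * lg\<close> unfolding lg_def a_def power2_eq_square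
    by (simp_all add: algebra_simps)
  define k where "k = int_len c m - j"
  have "2 * a * lg\<^sup>2 - 1 \<le> real k"
    using \<open>2 * a * lg\<^sup>2 - 1 \<le> real (int_len c m) - real j\<close> \<open>j \<le> int_len c m\<close>
    unfolding k_def by simp
  with \<open>1 \<le> lg\<close> \<open>0 \<le> p\<close> \<open>p \<le> 1\<close> \<open>1 \<le> p * (a * lg)\<close>
  have "2 * lg - 1 \<le> p * real k"
    by (rule gap_times_density_ge)
  have "real (card (avoiding C (int_len c m))) / 2 ^ int_len c m
      = real (card (avoiding C (j + k))) / 2 ^ (j + k)"
    unfolding k_def using \<open>j \<le> int_len c m\<close> by simp
  also have "\<dots> \<le> (1 - p) ^ k"
    using avoiding_density_decay[of j C k] mu unfolding n p_def by simp
  also have "\<dots> \<le> exp (- (p * real k))"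
    using \<open>p \<le> 1\<close> by (rule one_minus_power_le_exp)
  also have "\<dots> \<le> exp (1 - 2 * lg)"
    using \<open>2 * lg - 1 \<le> p * real k\<close> by simp
  also have "\<dots> \<le> 3 / (real m)\<^sup>2"
    unfolding lg_def using m by (intro exp_one_minus_two_log2_le) simp
  finally show ?thesis .
qed

lemma card_rank_less_le:
  assumes "finite C" and "transp r" and "irreflp r" and "totalp_on C r"
  shows "card {w \<in> C. card {v \<in> C. r v w} < k} \<le> k"
proof -
  let ?rank = "\<lambda>w. card {v \<in> C. r v w}"
  have less: "?rank w < ?rank w'" if "w \<in> C" "r w w'" for w w'
  proof -
    have "{v \<in> C. r v w} \<subset> {v \<in> C. r v w'}"
      using that assms(2,3) by (auto dest: transpD irreflpD)
    then show ?thesis using assms(1) by (simp add: psubset_card_mono)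
  qed
  have "inj_on ?rank C"
  proof (rule inj_onI, rule ccontr)
    fix w w' assume "w \<in> C" "w' \<in> C" "?rank w = ?rank w'" "w \<noteq> w'"
    then show False
      using assms(4) less[of w w'] less[of w' w] unfolding totalp_on_def by fastforce
  qed
  then have "card {w \<in> C. ?rank w < k} \<le> card {..<k}"
    by (rule card_inj_on_le[OF inj_on_subset]) auto
  then show ?thesis by simp
qed

lemma card_markers_le:
  assumes "finite C"
  shows "card (markers C t) \<le> t + 1"
proof -
  \<comment> \<open>\<open>markers\<close> uses the relation-parametrised \<open>List.lexordp\<close>;
    the order facts are about \<open>ord_class.lexordp\<close>.\<close>
  have lex: "List.lexordp (<) = (ord_class.lexordp :: bool list \<Rightarrow> bool list \<Rightarrow> bool)"
    by (simp add: fun_eq_iff List.lexordp_def lexordp_conv_lexord)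
  show ?thesis
    unfolding markers_def lex
  proof (rule card_rank_less_le[OF assms])
    show "transp (ord_class.lexordp :: bool list \<Rightarrow> _)" by (rule transpI) (rule lexordp_trans)
    show "irreflp (ord_class.lexordp :: bool list \<Rightarrow> _)" by (rule irreflpI) (rule lexordp_irreflexive')
    show "totalp_on C ord_class.lexordp"
      unfolding totalp_on_def using lexordp_linear by blast
  qed
qed

lemma not_legit_subset:
  assumes mu: "MU_code (cw_len c m) C"
  shows "{z. length z = m \<and> \<not> legit c t C z}
    \<subseteq> some_window_in m (int_len c m) (avoiding C (int_len c m))
      \<union> repeated_window m (cw_len c m)
      \<union> some_window_in m (cw_len c m) (markers C t)"
proof
  fix z assume "z \<in> {z. length z = m \<and> \<not> legit c t C z}"
  then have "length z = m" and "\<not> legit c t C z" by auto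
  then consider
      i where "i + int_len c m \<le> m" "\<forall>w\<in>C. \<not> occurs_in w (take (int_len c m) (drop i z))"
    | "z \<in> repeated_window m (cw_len c m)"
    | w where "w \<in> markers C t" "occurs_in w z"
    unfolding legit_def Let_def repeated_window_def by blast
  then show "z \<in> some_window_in m (int_len c m) (avoiding C (int_len c m))
      \<union> repeated_window m (cw_len c m) \<union> some_window_in m (cw_len c m) (markers C t)"
  proof cases
    case (1 i)
    then show ?thesis
      using \<open>length z = m\<close> unfolding some_window_in_def avoiding_def by auto
  next
    case 2
    then show ?thesis by blast
  next
    case (3 w)
    moreover have "length w = cw_len c m"
      using \<open>w \<in> markers C t\<close> MU_code_subset[OF mu] unfolding markers_def by auto
    ultimately show ?thesis
      using \<open>length z = m\<close> unfolding some_window_in_def occurs_in_def by auto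
  qed
qed

lemma not_legit_fraction_le:
  assumes mu: "MU_code (cw_len c m) C" and "0 < cw_len c m" and "0 < int_len c m" and "t < m"
  shows "real (card {z. length z = m \<and> \<not> legit c t C z}) / 2 ^ m
    \<le> real m * (real (card (avoiding C (int_len c m))) / 2 ^ int_len c m)
      + 2 * ((real m)\<^sup>2 / 2 ^ cw_len c m)"
proof -
  let ?n = "cw_len c m" and ?L = "int_len c m"
  let ?B1 = "some_window_in m ?L (avoiding C ?L)"
    and ?B2 = "repeated_window m ?n"
    and ?B3 = "some_window_in m ?n (markers C t)"
  have "finite (?B1 \<union> ?B2 \<union> ?B3)"
    by (rule finite_subset[OF _ finite_bool_lists[of m]])
      (auto simp: some_window_in_def repeated_window_def)
  then have "card {z. length z = m \<and> \<not> legit c t C z} \<le> card (?B1 \<union> ?B2 \<union> ?B3)"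
    using not_legit_subset[OF mu] by (rule card_mono)
  also have "\<dots> \<le> card ?B1 + card ?B2 + card ?B3"
    by (meson card_Un_le add_right_mono order_trans)
  finally have "real (card {z. length z = m \<and> \<not> legit c t C z})
      \<le> real (card ?B1) + real (card ?B2) + real (card ?B3)"
    by (metis of_nat_add of_nat_le_iff)
  then have "real (card {z. length z = m \<and> \<not> legit c t C z}) / 2 ^ m
      \<le> real (card ?B1) / 2 ^ m + real (card ?B2) / 2 ^ m + real (card ?B3) / 2 ^ m"
    by (simp add: divide_right_mono flip: add_divide_distrib)
  moreover have "real (card ?B1) / 2 ^ m \<le> real m * (real (card (avoiding C ?L)) / 2 ^ ?L)"
    using avoiding_subset \<open>0 < ?L\<close> by (rule some_window_in_fraction_le)
  moreover have "real (card ?B2) / 2 ^ m \<le> (real m)\<^sup>2 / 2 ^ ?n"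
    using \<open>0 < ?n\<close> by (rule repeated_window_fraction_le)
  moreover have "real (card ?B3) / 2 ^ m \<le> (real m)\<^sup>2 / 2 ^ ?n"
  proof -
    have "markers C t \<subseteq> {x. length x = ?n}"
      using MU_code_subset[OF mu] unfolding markers_def by auto
    then have "real (card ?B3) / 2 ^ m \<le> real m * (real (card (markers C t)) / 2 ^ ?n)"
      using \<open>0 < ?n\<close> by (rule some_window_in_fraction_le)
    also have "\<dots> \<le> real m * (real m / 2 ^ ?n)"
      using card_markers_le[OF MU_code_finite[OF mu], of t] \<open>t < m\<close>
      by (intro mult_left_mono divide_right_mono) auto
    finally show ?thesis by (simp add: power2_eq_square)
  qed
  ultimately show ?thesis by linarith
qed

theorem theorem7:
  fixes c :: nat
  assumes "c \<ge> 3"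
  shows "\<exists>K d. K > 0 \<and> d > 0 \<and>
    (\<forall>(m::nat) (t::nat) (C::bool list set).
       1 \<le> t \<longrightarrow> t < m \<longrightarrow>
       MU_code (cw_len c m) C \<longrightarrow>
       real (card C) \<ge> 2 ^ (cw_len c m) / (real beta * real c * log 2 (real m)) \<longrightarrow>
       real (card {z. length z = m \<and> \<not> legit c t C z}) / 2 ^ m \<le> K / real m powr d)"
proof (rule exI[of _ 5], rule exI[of _ 1], intro conjI allI impI)
  fix m t :: nat and C :: "bool list set"
  assume "1 \<le> t" "t < m" and mu: "MU_code (cw_len c m) C"
    and big: "2 ^ cw_len c m / (real beta * real c * log 2 (real m)) \<le> real (card C)"
  then have m: "2 \<le> m" by simp
  have "0 < int_len c m" using int_len_pos[OF m] assms by simp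
  have "real (card {z. length z = m \<and> \<not> legit c t C z}) / 2 ^ m
      \<le> real m * (real (card (avoiding C (int_len c m))) / 2 ^ int_len c m)
        + 2 * ((real m)\<^sup>2 / 2 ^ cw_len c m)"
    using mu cw_len_bounds(1)[OF m assms] \<open>0 < int_len c m\<close> \<open>t < m\<close>
    by (rule not_legit_fraction_le)
  also have "\<dots> \<le> real m * (3 / (real m)\<^sup>2) + 2 * ((real m)\<^sup>2 / 2 ^ cw_len c m)"
    using avoiding_int_len_density_le[OF m assms mu big]
    by (intro add_right_mono mult_left_mono) simp_all
  also have "\<dots> \<le> 3 / real m + 2 / real m"
    using cw_len_bounds(3)[OF m assms] m
    by (simp add: field_simps power2_eq_square power3_eq_cube)
  finally show "real (card {z. length z = m \<and> \<not> legit c t C z}) / 2 ^ m \<le> 5 / real m powr 1"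
    using m by simp
qed simp_all

end
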